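(* Let $n,m\ge 1$ be integers. If there exist Knowlton-Graham partitions of $\{1,\ldots,n\}$ of order $m$, then $\binom{m+1}{2}\le n\le J(m)$, where $J(m)=\sum_{j=1}^m j\lfloor m/j\rfloor$.
   Context: A pair of Knowlton-Graham partitions of $\{1,\ldots,n\}$ consists of two partitions $A_1,\ldots,A_p$ and $B_1,\ldots,B_q$ of $\{1,\ldots,n\}$ into nonempty pairwise disjoint sets such that, for every pair of positive integers $(j,k)$, at most one element of $\{1,\ldots,n\}$ lies both in some $A_i$ with $|A_i|=j$ and in some $B_l$ with $|B_l|=k$. The order of such a pair is the largest of the cardinalities $|A_1|,\ldots,|A_p|,|B_1|,\ldots,|B_q|$. *)

theory Defs
  imports Main "HOL-Library.Disjoint_Sets"
begin

definition KG_pair :: "nat \<Rightarrow> nat set set \<Rightarrow> nat set set \<Rightarrow> bool" where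
  "KG_pair n P Q \<longleftrightarrow>
     partition_on {1..n} P \<and> partition_on {1..n} Q \<and>
     (\<forall>j k::nat. \<forall>x\<in>{1..n}. \<forall>y\<in>{1..n}.
        ((\<exists>A\<in>P. x \<in> A \<and> card A = j) \<and> (\<exists>B\<in>Q. x \<in> B \<and> card B = k) \<and>
         (\<exists>A\<in>P. y \<in> A \<and> card A = j) \<and> (\<exists>B\<in>Q. y \<in> B \<and> card B = k)) \<longrightarrow> x = y)"

definition KG_order :: "nat set set \<Rightarrow> nat set set \<Rightarrow> nat" where
  "KG_order P Q = Max (card ` (P \<union> Q))"

definition J :: "nat \<Rightarrow> nat" where
  "J m = (\<Sum>j=1..m. j * (m div j))"

end

theory Submission
  imports Defs
begin

text \<open>Two elements of a Knowlton-Graham pair with the same pair of block sizes coincide. If A is a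
  block of maximal size m, its m elements therefore lie in Q-blocks of pairwise distinct sizes in
  {1..m}, i.e. of all sizes 1, ..., m; these Q-blocks are disjoint, so n \<ge> 1 + ... + m.
  Conversely, the union of the P-blocks of size j has distinct Q-block sizes too, so it has at
  most m elements; being a multiple of j, it has at most j * (m div j) elements, and summing
  over j = 1, ..., m gives n \<le> J m.\<close>

definition block :: "'a set set \<Rightarrow> 'a \<Rightarrow> 'a set" where
  "block P x = (THE B. B \<in> P \<and> x \<in> B)"

lemma block_eqI:
  assumes "partition_on S P" "B \<in> P" "x \<in> B"
  shows "block P x = B"
  unfolding block_def
proof (rule the_equality)
  show "B \<in> P \<and> x \<in> B" using assms(2,3) ..
  fix C assume "C \<in> P \<and> x \<in> C"
  then show "C = B"
    using disjointD[OF partition_onD2[OF assms(1)] _ assms(2)] assms(3) by blast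
qed

lemma block_in_partition:
  assumes "partition_on S P" "x \<in> S"
  shows "block P x \<in> P" and "x \<in> block P x"
proof -
  obtain B where "B \<in> P" "x \<in> B" using partition_onD1[OF assms(1)] assms(2) by blast
  then show "block P x \<in> P" "x \<in> block P x" using block_eqI[OF assms(1)] by simp_all
qed

lemma partition_on_finite_block:
  assumes "partition_on S P" "finite S" "B \<in> P"
  shows "finite B"
  using finite_subset[OF _ assms(2)] partition_onD1[OF assms(1)] assms(3) by blast

lemma partition_on_card_bounds:
  assumes "partition_on S P" "finite S" "\<forall>B\<in>P. card B \<le> m" "B \<in> P"
  shows "card B \<in> {1..m}"
  using partition_onD3[OF assms(1)] partition_on_finite_block[OF assms(1,2,4)] assms(3,4)
  by (auto simp: Suc_le_eq card_gt_0_iff)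

lemma card_block_bounds:
  assumes "partition_on S P" "finite S" "\<forall>B\<in>P. card B \<le> m" "x \<in> S"
  shows "card (block P x) \<in> {1..m}"
  using partition_on_card_bounds[OF assms(1-3) block_in_partition(1)[OF assms(1,4)]] .

lemma sum_card_block_le:
  assumes "partition_on S P" "finite S" "X \<subseteq> S" "inj_on (\<lambda>x. card (block P x)) X"
  shows "(\<Sum>x\<in>X. card (block P x)) \<le> card S"
proof -
  have inj: "inj_on (block P) X" using assms(4) by (auto simp: inj_on_def)
  have blocks: "block P ` X \<subseteq> P" using block_in_partition(1)[OF assms(1)] assms(3) by blast
  have "(\<Sum>x\<in>X. card (block P x)) = (\<Sum>B\<in>block P ` X. card B)"
    by (simp add: sum.reindex[OF inj])
  also have "\<dots> = card (\<Union>(block P ` X))"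
  proof (rule card_Union_disjoint[symmetric])
    show "pairwise disjnt (block P ` X)"
      using pairwise_subset[OF partition_onD2[OF assms(1)] blocks] .
    fix B assume "B \<in> block P ` X"
    then show "finite B" using partition_on_finite_block[OF assms(1,2)] blocks by blast
  qed
  also have "\<dots> \<le> card S"
    using blocks partition_onD1[OF assms(1)] assms(2) by (intro card_mono) auto
  finally show ?thesis .
qed

lemma card_le_if_inj_on_card_block:
  assumes "partition_on S P" "finite S" "\<forall>B\<in>P. card B \<le> m"
    and "X \<subseteq> S" "inj_on (\<lambda>x. card (block P x)) X"
  shows "card X \<le> m"
proof -
  have "(\<lambda>x. card (block P x)) ` X \<subseteq> {1..m}"
    using card_block_bounds[OF assms(1-3)] assms(4) by blast
  then have "card X \<le> card {1..m}" by (rule card_inj_on_le[OF assms(5)]) simp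
  then show ?thesis by simp
qed

lemma card_eq_sum_card_blocks_of_size:
  assumes "partition_on S P" "finite S" "\<forall>B\<in>P. card B \<le> m"
  shows "card S = (\<Sum>j=1..m. j * card {B\<in>P. card B = j})"
proof -
  have fin: "finite P" using finite_elements[OF assms(2,1)] .
  have "card ` P \<subseteq> {1..m}" using partition_on_card_bounds[OF assms] by blast
  then have "(\<Sum>j=1..m. \<Sum>B\<in>{B\<in>P. card B = j}. card B) = (\<Sum>B\<in>P. card B)"
    using sum.group[OF fin, of "{1..m}" card card] by simp
  moreover have "card S = (\<Sum>B\<in>P. card B)"
    using product_partition[OF assms(1)] partition_on_finite_block[OF assms(1,2)] .
  ultimately show ?thesis by (simp add: mult.commute)
qed

lemma KG_pair_sym: "KG_pair n P Q \<Longrightarrow> KG_pair n Q P"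
  unfolding KG_pair_def by blast

lemma KG_pair_inj_on:
  assumes "KG_pair n P Q"
  shows "inj_on (\<lambda>x. (card (block P x), card (block Q x))) {1..n}"
proof (rule inj_onI)
  fix x y assume xy: "x \<in> {1..n}" "y \<in> {1..n}"
    and eq: "(card (block P x), card (block Q x)) = (card (block P y), card (block Q y))"
  have P: "partition_on {1..n} P" and Q: "partition_on {1..n} Q"
    using assms unfolding KG_pair_def by simp_all
  have KG: "\<forall>j k. \<forall>x\<in>{1..n}. \<forall>y\<in>{1..n}.
      ((\<exists>A\<in>P. x \<in> A \<and> card A = j) \<and> (\<exists>B\<in>Q. x \<in> B \<and> card B = k) \<and>
       (\<exists>A\<in>P. y \<in> A \<and> card A = j) \<and> (\<exists>B\<in>Q. y \<in> B \<and> card B = k)) \<longrightarrow> x = y"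
    using assms unfolding KG_pair_def by blast
  have "(\<exists>A\<in>P. x \<in> A \<and> card A = card (block P x)) \<and> (\<exists>B\<in>Q. x \<in> B \<and> card B = card (block Q x)) \<and>
      (\<exists>A\<in>P. y \<in> A \<and> card A = card (block P x)) \<and> (\<exists>B\<in>Q. y \<in> B \<and> card B = card (block Q x))"
    using block_in_partition[OF P xy(1)] block_in_partition[OF P xy(2)]
      block_in_partition[OF Q xy(1)] block_in_partition[OF Q xy(2)] eq by auto
  then show "x = y" using KG xy by blast
qed

lemma KG_pair_inj_on_card_block:
  assumes "KG_pair n P Q" "X \<subseteq> {1..n}" "\<forall>x\<in>X. card (block P x) = j"
  shows "inj_on (\<lambda>x. card (block Q x)) X"
  using inj_on_subset[OF KG_pair_inj_on[OF assms(1)] assms(2)] assms(3)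
  by (auto simp: inj_on_def)

lemma KG_pair_lower_bound:
  assumes kg: "KG_pair n P Q" and A: "A \<in> P" and max: "\<forall>B\<in>Q. card B \<le> card A"
  shows "(card A + 1) choose 2 \<le> n"
proof -
  let ?m = "card A" and ?size = "\<lambda>x. card (block Q x)"
  have P: "partition_on {1..n} P" and Q: "partition_on {1..n} Q"
    using kg unfolding KG_pair_def by simp_all
  have A_sub: "A \<subseteq> {1..n}" using A partition_onD1[OF P] by blast
  have "\<forall>x\<in>A. card (block P x) = ?m" using block_eqI[OF P A] by simp
  then have inj: "inj_on ?size A" by (rule KG_pair_inj_on_card_block[OF kg A_sub])
  have "?size ` A \<subseteq> {1..?m}"
    using card_block_bounds[OF Q _ max] A_sub by blast
  then have sizes: "?size ` A = {1..?m}"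
    using card_image[OF inj] by (intro card_subset_eq) simp_all
  have "(card A + 1) choose 2 = \<Sum>{1..?m}"
    by (simp add: choose_two Sum_Icc_nat mult.commute)
  also have "\<dots> = (\<Sum>x\<in>A. ?size x)"
    using sum.reindex[OF inj, of id] sizes by simp
  also have "\<dots> \<le> n"
    using sum_card_block_le[OF Q _ A_sub inj] by simp
  finally show ?thesis .
qed

lemma KG_pair_card_blocks_of_size:
  assumes kg: "KG_pair n P Q" and max: "\<forall>B\<in>Q. card B \<le> m"
  shows "j * card {A\<in>P. card A = j} \<le> m"
proof -
  have P: "partition_on {1..n} P" and Q: "partition_on {1..n} Q"
    using kg unfolding KG_pair_def by simp_all
  let ?X = "\<Union>{A\<in>P. card A = j}"
  have X_sub: "?X \<subseteq> {1..n}" using partition_onD1[OF P] by blast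
  have "\<forall>x\<in>?X. card (block P x) = j" using block_eqI[OF P] by blast
  then have "inj_on (\<lambda>x. card (block Q x)) ?X" by (rule KG_pair_inj_on_card_block[OF kg X_sub])
  then have "card ?X \<le> m" using card_le_if_inj_on_card_block[OF Q _ max X_sub] by simp
  moreover have "j * card {A\<in>P. card A = j} = card ?X"
    using finite_elements[OF _ P] finite_subset[OF X_sub]
      disjointD[OF partition_onD2[OF P]]
    by (intro card_partition) auto
  ultimately show ?thesis by simp
qed

lemma KG_pair_upper_bound:
  assumes kg: "KG_pair n P Q" and max: "\<forall>B\<in>P \<union> Q. card B \<le> m"
  shows "n \<le> J m"
proof -
  have P: "partition_on {1..n} P" using kg unfolding KG_pair_def by simp
  have "j * card {A\<in>P. card A = j} \<le> j * (m div j)" if "j \<in> {1..m}" for j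
    using KG_pair_card_blocks_of_size[OF kg, of m j] max that
    by (simp add: less_eq_div_iff_mult_less_eq mult.commute)
  then have "(\<Sum>j=1..m. j * card {A\<in>P. card A = j}) \<le> J m"
    unfolding J_def by (rule sum_mono)
  then show ?thesis
    using card_eq_sum_card_blocks_of_size[OF P _, of m] max by simp
qed

lemma KG_order_attained:
  assumes "KG_pair n P Q" "n \<ge> 1"
  shows "\<forall>B\<in>P \<union> Q. card B \<le> KG_order P Q" and "\<exists>A\<in>P \<union> Q. card A = KG_order P Q"
proof -
  have P: "partition_on {1..n} P" and Q: "partition_on {1..n} Q"
    using assms(1) unfolding KG_pair_def by simp_all
  have fin: "finite (card ` (P \<union> Q))"
    using finite_elements[OF _ P] finite_elements[OF _ Q] by simp
  have "P \<noteq> {}" using partition_onD1[OF P] assms(2) by auto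
  then show "\<exists>A\<in>P \<union> Q. card A = KG_order P Q"
    using Max_in[OF fin] unfolding KG_order_def by fastforce
  show "\<forall>B\<in>P \<union> Q. card B \<le> KG_order P Q"
    using fin unfolding KG_order_def by simp
qed

theorem theorem1:
  fixes n m :: nat
  assumes "n \<ge> 1" and "m \<ge> 1"
    and "\<exists>P Q. KG_pair n P Q \<and> KG_order P Q = m"
  shows "(m + 1) choose 2 \<le> n \<and> n \<le> J m"
proof -
  obtain P Q where kg: "KG_pair n P Q" and order: "KG_order P Q = m" using assms(3) by blast
  note max = KG_order_attained(1)[OF kg assms(1), unfolded order]
  obtain A where A: "A \<in> P \<union> Q" "card A = m"
    using KG_order_attained(2)[OF kg assms(1)] order by blast
  have "(m + 1) choose 2 \<le> n"
  proof (cases "A \<in> P")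
    case True
    then show ?thesis using KG_pair_lower_bound[OF kg] A max by blast
  next
    case False
    then show ?thesis using KG_pair_lower_bound[OF KG_pair_sym[OF kg]] A max by blast
  qed
  then show ?thesis using KG_pair_upper_bound[OF kg max] by simp
qed

end
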